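(* Let $\mathcal{G}=(\mathcal{V},\mathcal{E})$ be a square lattice with open boundary conditions and one smooth defect. Concretely, take a finite rectangular grid graph and remove a square block of plaquettes lying in its interior: delete the vertices and edges strictly inside the block and keep the cycle of edges that bounds it. All edges carry the same positive weight, and $T=\emptyset$. Let $\Gamma\subseteq\mathcal{E}$ be the set of edges crossed by a path on the dual lattice that connects the defect (the face formed by the removed block) to the external boundary (the outer face). Let $E,E'\subseteq\mathcal{E}$ be any two uncorrectable chains. Then there is a sequence of chains $E=E_0,E_1,\ldots,E_k=E'$ such that each $E_{i+1}$ is obtained from $E_i$ by adding or removing a single edge (i.e. $|E_i\oplus E_{i+1}|=1$), and every $E_i$ is uncorrectable.
   Context: A chain is a subset of edges. Its boundary $\partial E$ is the set of vertices incident to an odd number of edges of $E$. The symbol $\oplus$ denotes symmetric difference. Given edge weights $\phi(e)$, the weight of a chain is $\phi(E)=\sum_{e\in E}\phi(e)$. $\mathcal{C}_{min}(S,T)$ is the set of minimum-weight chains $R$ with $(\partial R)\setminus T=S$; here $T=\emptyset$. The parity of a chain is $\epsilon(E)=|E\cap\Gamma|\bmod 2$. An error chain $E$ with syndrome $S=(\partial E)\setminus T$ is correctable iff $\epsilon(R)=\epsilon(E)$ for all $R\in\mathcal{C}_{min}(S,T)$, and uncorrectable otherwise. *)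

theory Defs
  imports Complex_Main
begin

type_synonym vtx = "int \<times> int"
type_synonym edge = "vtx set"

definition bd :: "edge set \<Rightarrow> vtx set" where
  "bd E = {v. odd (card {e \<in> E. v \<in> e})}"

definition symdiff :: "'a set \<Rightarrow> 'a set \<Rightarrow> 'a set" where
  "symdiff A B = (A - B) \<union> (B - A)"

definition chain_weight :: "(edge \<Rightarrow> real) \<Rightarrow> edge set \<Rightarrow> real" where
  "chain_weight \<phi> E = (\<Sum>e\<in>E. \<phi> e)"

definition Cmin :: "edge set \<Rightarrow> (edge \<Rightarrow> real) \<Rightarrow> vtx set \<Rightarrow> vtx set \<Rightarrow> edge set set" where
  "Cmin Ed \<phi> S T = {R. R \<subseteq> Ed \<and> bd R - T = S \<and>
      (\<forall>R'. R' \<subseteq> Ed \<and> bd R' - T = S \<longrightarrow> chain_weight \<phi> R \<le> chain_weight \<phi> R')}"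

definition parity :: "edge set \<Rightarrow> edge set \<Rightarrow> nat" where
  "parity \<Gamma> E = card (E \<inter> \<Gamma>) mod 2"

definition correctable :: "edge set \<Rightarrow> (edge \<Rightarrow> real) \<Rightarrow> vtx set \<Rightarrow> edge set \<Rightarrow> edge set \<Rightarrow> bool" where
  "correctable Ed \<phi> T \<Gamma> E = (\<forall>R \<in> Cmin Ed \<phi> (bd E - T) T. parity \<Gamma> R = parity \<Gamma> E)"

definition uncorrectable :: "edge set \<Rightarrow> (edge \<Rightarrow> real) \<Rightarrow> vtx set \<Rightarrow> edge set \<Rightarrow> edge set \<Rightarrow> bool" where
  "uncorrectable Ed \<phi> T \<Gamma> E = (\<not> correctable Ed \<phi> T \<Gamma> E)"

text \<open>The block consists of the s x s plaquettes with lower-left corners (i,j),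
  a \<le> i < a+s, b \<le> j < b+s.\<close>

definition hE :: "int \<Rightarrow> int \<Rightarrow> edge" where "hE i j = {(i,j), (i+1,j)}"
definition vE :: "int \<Rightarrow> int \<Rightarrow> edge" where "vE i j = {(i,j), (i,j+1)}"

definition lat_vertices :: "int \<Rightarrow> int \<Rightarrow> int \<Rightarrow> int \<Rightarrow> int \<Rightarrow> vtx set" where
  "lat_vertices m n a b s = {(i,j). 0 \<le> i \<and> i \<le> m \<and> 0 \<le> j \<and> j \<le> n \<and>
       \<not> (a < i \<and> i < a+s \<and> b < j \<and> j < b+s)}"

text \<open>Edges kept: those whose midpoint is not strictly inside the block.\<close>
definition lat_edges :: "int \<Rightarrow> int \<Rightarrow> int \<Rightarrow> int \<Rightarrow> int \<Rightarrow> edge set" where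
  "lat_edges m n a b s =
     {hE i j | i j. 0 \<le> i \<and> i < m \<and> 0 \<le> j \<and> j \<le> n \<and>
         \<not> (a \<le> i \<and> i < a+s \<and> b < j \<and> j < b+s)} \<union>
     {vE i j | i j. 0 \<le> i \<and> i \<le> m \<and> 0 \<le> j \<and> j < n \<and>
         \<not> (a < i \<and> i < a+s \<and> b \<le> j \<and> j < b+s)}"

datatype face = Plaq int int | Defect | Outer

definition lat_faces :: "int \<Rightarrow> int \<Rightarrow> int \<Rightarrow> int \<Rightarrow> int \<Rightarrow> face set" where
  "lat_faces m n a b s = {Plaq i j | i j. 0 \<le> i \<and> i < m \<and> 0 \<le> j \<and> j < n \<and>
       \<not> (a \<le> i \<and> i < a+s \<and> b \<le> j \<and> j < b+s)} \<union> {Defect, Outer}"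

fun face_edges :: "int \<Rightarrow> int \<Rightarrow> int \<Rightarrow> int \<Rightarrow> int \<Rightarrow> face \<Rightarrow> edge set" where
  "face_edges m n a b s (Plaq i j) = {hE i j, hE i (j+1), vE i j, vE (i+1) j}"
| "face_edges m n a b s Defect =
     {hE i b | i. a \<le> i \<and> i < a+s} \<union> {hE i (b+s) | i. a \<le> i \<and> i < a+s} \<union>
     {vE a j | j. b \<le> j \<and> j < b+s} \<union> {vE (a+s) j | j. b \<le> j \<and> j < b+s}"
| "face_edges m n a b s Outer =
     {hE i 0 | i. 0 \<le> i \<and> i < m} \<union> {hE i n | i. 0 \<le> i \<and> i < m} \<union>
     {vE 0 j | j. 0 \<le> j \<and> j < n} \<union> {vE m j | j. 0 \<le> j \<and> j < n}"

text \<open>The set of crossed edges is set es.\<close>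
definition dual_path :: "int \<Rightarrow> int \<Rightarrow> int \<Rightarrow> int \<Rightarrow> int \<Rightarrow> face list \<Rightarrow> edge list \<Rightarrow> bool" where
  "dual_path m n a b s fs es \<longleftrightarrow>
     fs \<noteq> [] \<and> hd fs = Defect \<and> last fs = Outer \<and> distinct fs \<and>
     set fs \<subseteq> lat_faces m n a b s \<and> length es + 1 = length fs \<and>
     (\<forall>k < length es. es ! k \<in> lat_edges m n a b s \<and>
        es ! k \<in> face_edges m n a b s (fs ! k) \<and>
        es ! k \<in> face_edges m n a b s (fs ! Suc k))"

end

theory Submission
  imports Defs "HOL-Library.Transitive_Closure_Table"
begin

text \<open>With uniform weights, E is uncorrectable iff some minimum-size chain R with the
  boundary of E has the other parity. Adding the edges of R to E one at a time keeps the
  chain uncorrectable, since the rest of R is still a minimal correction of the other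
  parity, and ends at a cycle crossing \<Gamma> an odd number of times. Two such cycles differ
  by a cycle crossing \<Gamma> evenly. On the lattice every cycle bounds a region, i.e. is a sum
  of plaquette boundaries, possibly plus the boundary of the defect; as \<Gamma> crosses the
  defect boundary once and every plaquette boundary twice or not at all, the difference
  is a sum of plaquettes. Adding one plaquette to an odd cycle takes four single-edge
  moves, each intermediate chain being corrected by at most two edges with the other
  parity.\<close>

lemma finite_symdiff: "finite A \<Longrightarrow> finite B \<Longrightarrow> finite (symdiff A B)"
  by (simp add: symdiff_def)

lemma card_symdiff_add:
  assumes "finite A" "finite B"
  shows "card (symdiff A B) + 2 * card (A \<inter> B) = card A + card B"
proof -
  have "card (A \<union> B) = card (symdiff A B) + card (A \<inter> B)"
    using assms by (subst card_Un_disjoint[symmetric]) (auto simp: symdiff_def intro: arg_cong[where f = card])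
  then show ?thesis
    using card_Un_Int[OF assms] by simp
qed

lemma odd_card_symdiff_Int:
  assumes "finite A" "finite B"
  shows "odd (card (symdiff A B \<inter> G)) \<longleftrightarrow> odd (card (A \<inter> G)) \<noteq> odd (card (B \<inter> G))"
proof -
  have "symdiff A B \<inter> G = symdiff (A \<inter> G) (B \<inter> G)"
    by (auto simp: symdiff_def)
  moreover have "card (symdiff (A \<inter> G) (B \<inter> G)) + 2 * card (A \<inter> G \<inter> (B \<inter> G)) =
      card (A \<inter> G) + card (B \<inter> G)"
    using assms by (intro card_symdiff_add) auto
  ultimately show ?thesis
    by presburger
qed

lemma bd_symdiff:
  assumes "finite A" "finite B"
  shows "bd (symdiff A B) = symdiff (bd A) (bd B)"
proof -
  have incident: "{e \<in> X. v \<in> e} = X \<inter> {e. v \<in> e}" for X :: "edge set" and v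
    by auto
  show ?thesis
    unfolding bd_def incident using odd_card_symdiff_Int[OF assms]
    by (auto simp: symdiff_def)
qed

lemma bd_empty [simp]: "bd {} = {}"
  by (simp add: bd_def)

lemma bd_singleton [simp]: "bd {e} = e"
proof -
  have "{x \<in> {e}. v \<in> x} = (if v \<in> e then {e} else {})" for v
    by auto
  then show ?thesis
    unfolding bd_def by auto
qed

lemma symdiff_symdiff_cancel_left: "symdiff (symdiff Y A) (symdiff Y B) = symdiff A B"
  by (auto simp: symdiff_def)

locale uniform_code =
  fixes Ed G :: "edge set" and w :: real
  assumes finite_Ed: "finite Ed" and weight_pos: "0 < w"
begin

abbreviation uncorrectable_chain :: "edge set \<Rightarrow> bool" where
  "uncorrectable_chain X \<equiv> X \<subseteq> Ed \<and> uncorrectable Ed (\<lambda>_. w) {} G X"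

abbreviation odd_cross :: "edge set \<Rightarrow> bool" where
  "odd_cross X \<equiv> odd (card (X \<inter> G))"

definition min_chain :: "edge set \<Rightarrow> bool" where
  "min_chain R \<longleftrightarrow> R \<subseteq> Ed \<and> (\<forall>R'. R' \<subseteq> Ed \<and> bd R' = bd R \<longrightarrow> card R \<le> card R')"

definition flip_step :: "edge set \<Rightarrow> edge set \<Rightarrow> bool" where
  "flip_step X Y \<longleftrightarrow>
     uncorrectable_chain X \<and> uncorrectable_chain Y \<and> card (symdiff X Y) = 1"

lemma finite_chain: "X \<subseteq> Ed \<Longrightarrow> finite X"
  using finite_Ed finite_subset by blast

lemma Cmin_uniform: "Cmin Ed (\<lambda>_. w) (bd X) {} = {R. min_chain R \<and> bd R = bd X}"
proof -
  have "chain_weight (\<lambda>_. w) A \<le> chain_weight (\<lambda>_. w) B \<longleftrightarrow> card A \<le> card B" for A B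
    unfolding chain_weight_def using weight_pos by simp
  then show ?thesis
    unfolding Cmin_def min_chain_def by auto
qed

lemma uncorrectable_iff_min_chain:
  "uncorrectable Ed (\<lambda>_. w) {} G X \<longleftrightarrow>
     (\<exists>R. min_chain R \<and> bd R = bd X \<and> odd_cross R \<noteq> odd_cross X)"
proof -
  have "parity G A \<noteq> parity G B \<longleftrightarrow> odd_cross A \<noteq> odd_cross B" for A B
    unfolding parity_def by (auto simp: odd_iff_mod_2_eq_one even_iff_mod_2_eq_zero)
  then show ?thesis
    unfolding uncorrectable_def correctable_def Diff_empty Cmin_uniform by blast
qed

lemma min_chain_empty: "min_chain {}"
  by (simp add: min_chain_def)

lemma min_chain_singleton:
  assumes "e \<in> Ed" "e \<noteq> {}"
  shows "min_chain {e}"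
  unfolding min_chain_def
proof (intro conjI allI impI)
  fix R' assume R': "R' \<subseteq> Ed \<and> bd R' = bd {e}"
  then have "R' \<noteq> {}" "finite R'"
    using assms(2) finite_chain by auto
  then show "card {e} \<le> card R'"
    by (simp add: Suc_leI card_gt_0_iff)
qed (use assms in simp)

text \<open>If R' had the boundary of R - K but fewer edges, then R' + K would beat R.\<close>
lemma min_chain_Diff:
  assumes R: "min_chain R" and K: "K \<subseteq> R"
  shows "min_chain (R - K)"
  unfolding min_chain_def
proof (intro conjI allI impI)
  have fin: "finite R" "finite K"
    using R K finite_chain unfolding min_chain_def by (auto dest: finite_subset)
  have RK: "R - K = symdiff R K"
    using K by (auto simp: symdiff_def)
  fix R' assume R': "R' \<subseteq> Ed \<and> bd R' = bd (R - K)"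
  then have "finite R'"
    using finite_chain by blast
  have "bd (symdiff R' K) = symdiff (symdiff (bd R) (bd K)) (bd K)"
    using R' fin \<open>finite R'\<close> unfolding RK by (simp add: bd_symdiff)
  then have "bd (symdiff R' K) = bd R"
    by (auto simp: symdiff_def)
  moreover have "symdiff R' K \<subseteq> Ed"
    using R' R K by (auto simp: symdiff_def min_chain_def)
  ultimately have "card R \<le> card (symdiff R' K)"
    using R unfolding min_chain_def by blast
  also have "\<dots> \<le> card R' + card K"
    using card_symdiff_add[OF \<open>finite R'\<close> fin(2)] by linarith
  finally show "card (R - K) \<le> card R'"
    using K fin by (simp add: card_Diff_subset)
qed (use R in \<open>auto simp: min_chain_def\<close>)

lemma uncorrectable_symdiff_odd_cycle:
  assumes Y: "Y \<subseteq> Ed" "bd Y = {}" "odd_cross Y" and D: "min_chain D"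
  shows "uncorrectable_chain (symdiff Y D)"
proof -
  have fin: "finite Y" "finite D"
    using Y D finite_chain unfolding min_chain_def by auto
  have "bd D = bd (symdiff Y D)"
    using Y(2) by (simp add: bd_symdiff[OF fin]) (simp add: symdiff_def)
  moreover have "odd_cross D \<noteq> odd_cross (symdiff Y D)"
    using Y odd_card_symdiff_Int[OF fin] by simp
  moreover have "symdiff Y D \<subseteq> Ed"
    using Y D by (auto simp: symdiff_def min_chain_def)
  ultimately show ?thesis
    using D uncorrectable_iff_min_chain by blast
qed

lemma uncorrectable_odd_cycle:
  "Y \<subseteq> Ed \<Longrightarrow> bd Y = {} \<Longrightarrow> odd_cross Y \<Longrightarrow> uncorrectable_chain Y"
  using uncorrectable_symdiff_odd_cycle[OF _ _ _ min_chain_empty] by (simp add: symdiff_def)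

lemma uncorrectable_symdiff_subset_correction:
  assumes E: "E \<subseteq> Ed" and R: "min_chain R" "bd R = bd E" "odd_cross R \<noteq> odd_cross E"
    and K: "K \<subseteq> R"
  shows "uncorrectable_chain (symdiff E K)"
proof -
  have fin: "finite E" "finite R" "finite K"
    using E R K finite_chain unfolding min_chain_def by (auto dest: finite_subset)
  have RK: "R - K = symdiff R K"
    using K by (auto simp: symdiff_def)
  have "bd (R - K) = bd (symdiff E K)"
    unfolding RK bd_symdiff[OF fin(2,3)] bd_symdiff[OF fin(1,3)] R(2) ..
  moreover have "odd_cross (R - K) \<noteq> odd_cross (symdiff E K)"
    unfolding RK using odd_card_symdiff_Int[OF fin(2,3)] odd_card_symdiff_Int[OF fin(1,3)] R(3)
    by simp
  moreover have "symdiff E K \<subseteq> Ed"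
    using E R K by (auto simp: symdiff_def min_chain_def)
  ultimately show ?thesis
    using min_chain_Diff[OF R(1) K] uncorrectable_iff_min_chain by blast
qed

lemma symdiff_cycles:
  assumes "A \<subseteq> Ed" "B \<subseteq> Ed" "bd A = {}" "bd B = {}"
  shows "symdiff A B \<subseteq> Ed" "bd (symdiff A B) = {}"
    "odd_cross (symdiff A B) \<longleftrightarrow> odd_cross A \<noteq> odd_cross B"
proof -
  have fin: "finite A" "finite B"
    using assms(1,2) finite_chain by auto
  show "symdiff A B \<subseteq> Ed"
    using assms(1,2) by (auto simp: symdiff_def)
  show "bd (symdiff A B) = {}"
    using assms(3,4) by (simp add: bd_symdiff[OF fin]) (simp add: symdiff_def)
  show "odd_cross (symdiff A B) \<longleftrightarrow> odd_cross A \<noteq> odd_cross B"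
    by (rule odd_card_symdiff_Int[OF fin])
qed

lemma flip_step_symdiff_iff:
  "flip_step (symdiff Y A) (symdiff Y B) \<longleftrightarrow>
     uncorrectable_chain (symdiff Y A) \<and> uncorrectable_chain (symdiff Y B) \<and> card (symdiff A B) = 1"
  by (simp add: flip_step_def symdiff_symdiff_cancel_left)

lemma flip_steps_sym: "flip_step\<^sup>*\<^sup>* X Y \<Longrightarrow> flip_step\<^sup>*\<^sup>* Y X"
proof (induction rule: rtranclp_induct)
  case (step Y Z)
  then have "flip_step Z Y"
    by (auto simp: flip_step_def symdiff_def Un_commute)
  then show ?case
    using step.IH by (rule converse_rtranclp_into_rtranclp)
qed simp

lemma flip_steps_to_odd_cycle:
  assumes E: "uncorrectable_chain E"
  obtains Z where "flip_step\<^sup>*\<^sup>* E Z" "Z \<subseteq> Ed" "bd Z = {}" "odd_cross Z"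
proof -
  obtain R where R: "min_chain R" "bd R = bd E" "odd_cross R \<noteq> odd_cross E"
    using E uncorrectable_iff_min_chain by blast
  have fin: "finite E" "finite R"
    using E R(1) finite_chain unfolding min_chain_def by auto
  have "flip_step\<^sup>*\<^sup>* E (symdiff E K)" if "finite K" "K \<subseteq> R" for K
    using that
  proof (induction K rule: finite_induct)
    case empty
    then show ?case by (simp add: symdiff_def)
  next
    case (insert e K)
    have "symdiff K (insert e K) = {e}"
      using insert.hyps(2) by (auto simp: symdiff_def)
    then have "flip_step (symdiff E K) (symdiff E (insert e K))"
      using insert uncorrectable_symdiff_subset_correction[OF conjunct1[OF E] R]
      by (simp add: flip_step_symdiff_iff)
    then show ?case
      using insert by (auto intro: rtranclp.rtrancl_into_rtrancl)
  qed
  then have "flip_step\<^sup>*\<^sup>* E (symdiff E R)"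
    using fin by blast
  moreover have "symdiff E R \<subseteq> Ed"
    using E R(1) by (auto simp: symdiff_def min_chain_def)
  moreover have "bd (symdiff E R) = {}"
    using R(2) by (simp add: bd_symdiff[OF fin]) (simp add: symdiff_def)
  moreover have "odd_cross (symdiff E R)"
    using R(3) odd_card_symdiff_Int[OF fin] by simp
  ultimately show ?thesis
    using that by blast
qed

text \<open>Flipping a 4-cycle edge by edge: the first two intermediate chains are corrected by
  the flipped edges, the third by the single edge still missing.\<close>
lemma flip_steps_four_cycle:
  assumes Y: "Y \<subseteq> Ed" "bd Y = {}" "odd_cross Y"
    and P: "P = {e1, e2, e3, e4}" "distinct [e1, e2, e3, e4]"
      "P \<subseteq> Ed" "bd P = {}" "\<not> odd_cross P"
    and min: "min_chain {e1}" "min_chain {e1, e2}" "min_chain {e4}"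
  shows "flip_step\<^sup>*\<^sup>* Y (symdiff Y P)"
proof -
  have Y': "symdiff Y P \<subseteq> Ed" "bd (symdiff Y P) = {}" "odd_cross (symdiff Y P)"
    using symdiff_cycles[OF Y(1) P(3) Y(2) P(4)] Y(3) P(5) by simp_all
  have "symdiff Y {e1, e2, e3} = symdiff (symdiff Y P) {e4}"
    using P(1,2) by (auto simp: symdiff_def)
  then have uncorr3: "uncorrectable_chain (symdiff Y {e1, e2, e3})"
    using uncorrectable_symdiff_odd_cycle[OF Y' min(3)] by simp
  have Y0: "symdiff Y {} = Y"
    by (simp add: symdiff_def)
  have uncorr: "uncorrectable_chain (symdiff Y {})" "uncorrectable_chain (symdiff Y {e1})"
      "uncorrectable_chain (symdiff Y {e1, e2})" "uncorrectable_chain (symdiff Y P)"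
    using uncorrectable_odd_cycle[OF Y] uncorrectable_symdiff_odd_cycle[OF Y min(1)]
      uncorrectable_symdiff_odd_cycle[OF Y min(2)] uncorrectable_odd_cycle[OF Y'] Y0 by simp_all
  have "symdiff {} {e1} = {e1}" "symdiff {e1} {e1, e2} = {e2}"
      "symdiff {e1, e2} {e1, e2, e3} = {e3}" "symdiff {e1, e2, e3} P = {e4}"
    using P(1,2) by (auto simp: symdiff_def)
  then have "flip_step (symdiff Y {}) (symdiff Y {e1})"
      "flip_step (symdiff Y {e1}) (symdiff Y {e1, e2})"
      "flip_step (symdiff Y {e1, e2}) (symdiff Y {e1, e2, e3})"
      "flip_step (symdiff Y {e1, e2, e3}) (symdiff Y P)"
    using uncorr uncorr3 by (simp_all add: flip_step_symdiff_iff)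
  then show ?thesis
    unfolding Y0 by (meson converse_rtranclp_into_rtranclp rtranclp.rtrancl_refl)
qed

end

lemma hE_eq_iff [simp]: "hE i j = hE i' j' \<longleftrightarrow> i = i' \<and> j = j'"
  unfolding hE_def by (auto simp: doubleton_eq_iff)

lemma vE_eq_iff [simp]: "vE i j = vE i' j' \<longleftrightarrow> i = i' \<and> j = j'"
  unfolding vE_def by (auto simp: doubleton_eq_iff)

lemma hE_neq_vE [simp]: "hE i j \<noteq> vE i' j'" "vE i' j' \<noteq> hE i j"
  unfolding vE_def hE_def by (auto simp: doubleton_eq_iff)

lemma mem_hE [simp]: "v \<in> hE i j \<longleftrightarrow> v = (i, j) \<or> v = (i + 1, j)"
  by (auto simp: hE_def)

lemma mem_vE [simp]: "v \<in> vE i j \<longleftrightarrow> v = (i, j) \<or> v = (i, j + 1)"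
  by (auto simp: vE_def)

definition grid_edges :: "edge set" where
  "grid_edges = {hE i j | i j. True} \<union> {vE i j | i j. True}"

lemma grid_edge_set_eqI:
  assumes "X \<subseteq> grid_edges" "Y \<subseteq> grid_edges"
    and "\<And>i j. hE i j \<in> X \<longleftrightarrow> hE i j \<in> Y" "\<And>i j. vE i j \<in> X \<longleftrightarrow> vE i j \<in> Y"
  shows "X = Y"
proof (intro set_eqI iffI)
  fix e assume "e \<in> X"
  then obtain i j where "e = hE i j \<or> e = vE i j"
    using assms(1) unfolding grid_edges_def by blast
  then show "e \<in> Y"
    using \<open>e \<in> X\<close> assms(3,4) by auto
next
  fix e assume "e \<in> Y"
  then obtain i j where "e = hE i j \<or> e = vE i j"
    using assms(2) unfolding grid_edges_def by blast
  then show "e \<in> X"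
    using \<open>e \<in> Y\<close> assms(3,4) by auto
qed

lemma lat_edges_subset_grid_edges: "lat_edges m n a b s \<subseteq> grid_edges"
  unfolding lat_edges_def grid_edges_def by (intro Un_mono) blast+

lemma face_edges_subset_grid_edges: "face_edges m n a b s f \<subseteq> grid_edges"
  unfolding grid_edges_def by (cases f) auto

text \<open>The plaquette (i, j) is the unit square with lower left corner (i, j), and
  plaquettes_bd A is the boundary of the 2-chain formed by the plaquettes in A.\<close>
definition plaquettes_bd :: "(int \<times> int) set \<Rightarrow> edge set" where
  "plaquettes_bd A =
     {hE i j | i j. ((i, j) \<in> A) \<noteq> ((i, j - 1) \<in> A)} \<union>
     {vE i j | i j. ((i, j) \<in> A) \<noteq> ((i - 1, j) \<in> A)}"

lemma hE_mem_plaquettes_bd [simp]: "hE i j \<in> plaquettes_bd A \<longleftrightarrow> ((i, j) \<in> A) \<noteq> ((i, j - 1) \<in> A)"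
  unfolding plaquettes_bd_def by auto

lemma vE_mem_plaquettes_bd [simp]: "vE i j \<in> plaquettes_bd A \<longleftrightarrow> ((i, j) \<in> A) \<noteq> ((i - 1, j) \<in> A)"
  unfolding plaquettes_bd_def by auto

lemma plaquettes_bd_empty [simp]: "plaquettes_bd {} = {}"
  by (simp add: plaquettes_bd_def)

lemma plaquettes_bd_subset_grid_edges: "plaquettes_bd A \<subseteq> grid_edges"
  unfolding plaquettes_bd_def grid_edges_def by blast

lemma plaquettes_bd_symdiff: "plaquettes_bd (symdiff A B) = symdiff (plaquettes_bd A) (plaquettes_bd B)"
  by (rule grid_edge_set_eqI) (auto simp: symdiff_def plaquettes_bd_subset_grid_edges
      intro: plaquettes_bd_subset_grid_edges[THEN subsetD])

lemma plaquettes_bd_singleton: "plaquettes_bd {(i, j)} = {hE i j, vE i j, hE i (j + 1), vE (i + 1) j}"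
  by (rule grid_edge_set_eqI[OF plaquettes_bd_subset_grid_edges]) (auto simp: grid_edges_def)

lemma plaquettes_bd_insert:
  "p \<notin> A \<Longrightarrow> plaquettes_bd (insert p A) = symdiff (plaquettes_bd A) (plaquettes_bd {p})"
proof -
  assume "p \<notin> A"
  then have "insert p A = symdiff A {p}"
    by (auto simp: symdiff_def)
  then show ?thesis
    by (simp add: plaquettes_bd_symdiff)
qed

lemma finite_plaquettes_bd_singleton: "finite (plaquettes_bd {p})"
  by (cases p) (simp add: plaquettes_bd_singleton)

lemma bd_plaquettes_bd_singleton: "bd (plaquettes_bd {p}) = {}"
proof (cases p)
  case (Pair i j)
  have "plaquettes_bd {p} = symdiff (symdiff (symdiff {hE i j} {vE i j}) {hE i (j + 1)}) {vE (i + 1) j}"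
    unfolding Pair plaquettes_bd_singleton by (auto simp: symdiff_def)
  then have "bd (plaquettes_bd {p}) = symdiff (symdiff (symdiff (hE i j) (vE i j)) (hE i (j + 1))) (vE (i + 1) j)"
    by (simp add: bd_symdiff finite_symdiff)
  also have "\<dots> = {}"
    by (auto simp: symdiff_def hE_def vE_def)
  finally show ?thesis .
qed

lemma finite_plaquettes_bd: "finite A \<Longrightarrow> finite (plaquettes_bd A)"
proof (induction A rule: finite_induct)
  case (insert p A)
  then show ?case
    unfolding plaquettes_bd_insert[OF insert.hyps(2)]
    using finite_plaquettes_bd_singleton by (simp add: finite_symdiff)
qed simp

lemma bd_plaquettes_bd: "finite A \<Longrightarrow> bd (plaquettes_bd A) = {}"
proof (induction A rule: finite_induct)
  case (insert p A)
  have "bd (plaquettes_bd (insert p A)) = symdiff (bd (plaquettes_bd A)) (bd (plaquettes_bd {p}))"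
    unfolding plaquettes_bd_insert[OF insert.hyps(2)]
    using insert.hyps finite_plaquettes_bd finite_plaquettes_bd_singleton by (simp add: bd_symdiff)
  then show ?case
    using insert.IH bd_plaquettes_bd_singleton[of p] by (simp add: symdiff_def)
qed simp

lemma odd_card_Int_four:
  assumes "distinct [p, q, r, t]"
  shows "odd (card (C \<inter> {p, q, r, t})) \<longleftrightarrow> (p \<in> C) \<noteq> ((q \<in> C) \<noteq> ((r \<in> C) \<noteq> (t \<in> C)))"
  using assms
  by (cases "p \<in> C"; cases "q \<in> C"; cases "r \<in> C"; cases "t \<in> C")
    (simp_all add: Int_insert_right card_insert_if)

lemma grid_vertex_even_degree:
  assumes C: "C \<subseteq> grid_edges" and v: "(i, j) \<notin> bd C"
  shows "((hE (i - 1) j \<in> C) \<noteq> (hE i j \<in> C)) \<longleftrightarrow> ((vE i (j - 1) \<in> C) \<noteq> (vE i j \<in> C))"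
proof -
  have "e \<in> {hE (i - 1) j, hE i j, vE i (j - 1), vE i j}" if e: "e \<in> C" "(i, j) \<in> e" for e
  proof -
    obtain x y where "e = hE x y \<or> e = vE x y"
      using e(1) C unfolding grid_edges_def by blast
    then show ?thesis
      using e(2) by (elim disjE) auto
  qed
  moreover have "(i, j) \<in> e" if "e \<in> {hE (i - 1) j, hE i j, vE i (j - 1), vE i j}" for e
    using that by auto
  ultimately have "{e \<in> C. (i, j) \<in> e} = C \<inter> {hE (i - 1) j, hE i j, vE i (j - 1), vE i j}"
    by blast
  then have "even (card (C \<inter> {hE (i - 1) j, hE i j, vE i (j - 1), vE i j}))"
    using v unfolding bd_def by simp
  moreover have "distinct [hE (i - 1) j, hE i j, vE i (j - 1), vE i j]"
    by simp
  ultimately show ?thesis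
    using odd_card_Int_four[of "hE (i - 1) j" "hE i j" "vE i (j - 1)" "vE i j" C] by auto
qed

text \<open>If C is a cycle, row_parity C i j says whether the plaquette (i, j) lies inside C:
  the ray from its centre to the left crosses C an odd number of times.\<close>
definition row_parity :: "edge set \<Rightarrow> int \<Rightarrow> int \<Rightarrow> bool" where
  "row_parity C i j \<longleftrightarrow> odd (card {k \<in> {0..i}. vE k j \<in> C})"

lemma row_parity_neg: "i < 0 \<Longrightarrow> \<not> row_parity C i j"
  unfolding row_parity_def by simp

lemma row_parity_step:
  assumes "0 \<le> i"
  shows "row_parity C i j \<longleftrightarrow> row_parity C (i - 1) j \<noteq> (vE i j \<in> C)"
proof -
  let ?S = "{k \<in> {0..i - 1}. vE k j \<in> C}"
  have "finite ?S"
    by (rule finite_subset[of _ "{0..i - 1}"]) auto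
  moreover have "i \<notin> ?S"
    by simp
  moreover have "{k \<in> {0..i}. vE k j \<in> C} = (if vE i j \<in> C then insert i ?S else ?S)"
    using assms by (force simp: le_less)
  ultimately show ?thesis
    unfolding row_parity_def by auto
qed

text \<open>A path through distinct vertices xs enters and leaves every intermediate vertex
  once, so the steps at a vertex are odd in number exactly at the two ends.\<close>
lemma odd_card_adjacent_positions:
  assumes xs: "distinct xs" "length xs = Suc N" "0 < N"
  shows "odd (card {k. k < N \<and> (xs ! k = x \<or> xs ! Suc k = x)}) \<longleftrightarrow> x = xs ! 0 \<or> x = xs ! N"
proof (cases "x \<in> set xs")
  case False
  have mem: "xs ! k \<in> set xs" if "k \<le> N" for k
    using that xs(2) by simp
  have no_steps: "{k. k < N \<and> (xs ! k = x \<or> xs ! Suc k = x)} = {}"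
    using mem False by (auto dest: less_imp_le Suc_leI)
  have "x \<noteq> xs ! 0" "x \<noteq> xs ! N"
    using mem[of 0] mem[of N] False by auto
  then show ?thesis
    unfolding no_steps by simp
next
  case True
  then obtain t where t: "t \<le> N" "xs ! t = x"
    using xs(2) by (metis in_set_conv_nth less_Suc_eq_le)
  have eq_iff: "k \<le> N \<Longrightarrow> xs ! k = x \<longleftrightarrow> k = t" for k
    using t xs(1,2) by (auto simp: nth_eq_iff_index_eq)
  then have K: "{k. k < N \<and> (xs ! k = x \<or> xs ! Suc k = x)} = {k. k < N \<and> (k = t \<or> Suc k = t)}"
    by (auto dest: less_imp_le Suc_leI)
  consider "t = 0" | "t = N" | "0 < t" "t < N"
    using t(1) by linarith
  then show ?thesis
  proof cases
    case 1
    then have "{k. k < N \<and> (k = t \<or> Suc k = t)} = {0}"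
      using xs(3) by auto
    then show ?thesis
      using K t 1 by simp
  next
    case 2
    then have "{k. k < N \<and> (k = t \<or> Suc k = t)} = {t - 1}"
      using xs(3) by auto
    then show ?thesis
      using K t 2 by simp
  next
    case 3
    then have "{k. k < N \<and> (k = t \<or> Suc k = t)} = {t - 1, t}"
      by auto
    moreover have "x \<noteq> xs ! 0" "x \<noteq> xs ! N"
      using 3 eq_iff by auto
    ultimately show ?thesis
      using K 3 by simp
  qed
qed

locale defect_lattice =
  fixes m n a b s :: int and w :: real and fs :: "face list" and es :: "edge list"
  assumes s_pos: "1 \<le> s" and a_pos: "1 \<le> a" and b_pos: "1 \<le> b"
    and block_right: "a + s \<le> m - 1" and block_top: "b + s \<le> n - 1"
    and weight_pos: "0 < w" and dual_path: "dual_path m n a b s fs es"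
begin

abbreviation L :: "edge set" where "L \<equiv> lat_edges m n a b s"
abbreviation F :: "face set" where "F \<equiv> lat_faces m n a b s"
abbreviation fe :: "face \<Rightarrow> edge set" where "fe \<equiv> face_edges m n a b s"

lemma hE_mem_L [simp]:
  "hE i j \<in> L \<longleftrightarrow> 0 \<le> i \<and> i < m \<and> 0 \<le> j \<and> j \<le> n \<and> \<not> (a \<le> i \<and> i < a + s \<and> b < j \<and> j < b + s)"
  unfolding lat_edges_def by auto

lemma vE_mem_L [simp]:
  "vE i j \<in> L \<longleftrightarrow> 0 \<le> i \<and> i \<le> m \<and> 0 \<le> j \<and> j < n \<and> \<not> (a < i \<and> i < a + s \<and> b \<le> j \<and> j < b + s)"
  unfolding lat_edges_def by auto

lemma finite_L: "finite L"
proof -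
  have "L \<subseteq> (\<lambda>(i, j). hE i j) ` ({0..m} \<times> {0..n}) \<union> (\<lambda>(i, j). vE i j) ` ({0..m} \<times> {0..n})"
    unfolding lat_edges_def by force
  then show ?thesis
    by (rule finite_subset) auto
qed

sublocale uniform_code L "set es" w
  using finite_L weight_pos by unfold_locales

lemma vE_mem_iff_row_parity:
  assumes "C \<subseteq> L"
  shows "vE i j \<in> C \<longleftrightarrow> row_parity C i j \<noteq> row_parity C (i - 1) j"
proof (cases "0 \<le> i")
  case True
  then show ?thesis
    using row_parity_step[OF True, of C j] by auto
next
  case False
  then show ?thesis
    using assms row_parity_neg by auto
qed

text \<open>Induction on the column, using that every vertex of a cycle has even degree.\<close>
lemma hE_mem_iff_row_parity:
  assumes C: "C \<subseteq> L" "bd C = {}"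
  shows "hE i j \<in> C \<longleftrightarrow> row_parity C i j \<noteq> row_parity C i (j - 1)"
proof (cases "i < -1")
  case True
  then show ?thesis
    using C(1) row_parity_neg by auto
next
  case False
  then have "-1 \<le> i"
    by simp
  then show ?thesis
  proof (induction i rule: int_ge_induct)
    case base
    then show ?case
      using C(1) row_parity_neg by auto
  next
    case (step i)
    have "C \<subseteq> grid_edges"
      using C(1) lat_edges_subset_grid_edges by blast
    then have "((hE i j \<in> C) \<noteq> (hE (i + 1) j \<in> C)) \<longleftrightarrow> ((vE (i + 1) (j - 1) \<in> C) \<noteq> (vE (i + 1) j \<in> C))"
      using grid_vertex_even_degree[of C "i + 1" j] C(2) by simp
    moreover have "row_parity C (i + 1) j \<longleftrightarrow> row_parity C i j \<noteq> (vE (i + 1) j \<in> C)"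
      "row_parity C (i + 1) (j - 1) \<longleftrightarrow> row_parity C i (j - 1) \<noteq> (vE (i + 1) (j - 1) \<in> C)"
      using row_parity_step[of "i + 1"] step.hyps by simp_all
    ultimately show ?case
      using step.IH by auto
  qed
qed

lemma cycle_eq_plaquettes_bd:
  assumes C: "C \<subseteq> L" "bd C = {}"
  shows "C = plaquettes_bd {(i, j). row_parity C i j}"
proof (rule grid_edge_set_eqI[OF _ plaquettes_bd_subset_grid_edges])
  show "C \<subseteq> grid_edges"
    using C(1) lat_edges_subset_grid_edges by blast
qed (simp_all add: hE_mem_iff_row_parity[OF C] vE_mem_iff_row_parity[OF C(1)])

lemma row_parity_outside_rows:
  assumes "C \<subseteq> L" "j < 0 \<or> n \<le> j"
  shows "\<not> row_parity C i j"
proof -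
  have no_edges: "{k \<in> {0..i}. vE k j \<in> C} = {}"
    using assms by auto
  show ?thesis
    unfolding row_parity_def no_edges by simp
qed

lemma row_parity_right_of_grid:
  assumes C: "C \<subseteq> L" "bd C = {}" and i: "m \<le> i"
  shows "\<not> row_parity C i j"
proof (cases "j < -1")
  case True
  then show ?thesis
    using row_parity_outside_rows[OF C(1)] by simp
next
  case False
  then have "-1 \<le> j"
    by simp
  then show ?thesis
  proof (induction j rule: int_ge_induct)
    case base
    then show ?case
      using row_parity_outside_rows[OF C(1)] by simp
  next
    case (step j)
    have "hE i (j + 1) \<notin> C"
      using C(1) i by auto
    then show ?case
      using step.IH hE_mem_iff_row_parity[OF C, of i "j + 1"] by simp
  qed
qed

lemma row_parity_support:
  assumes C: "C \<subseteq> L" "bd C = {}" and "row_parity C i j"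
  shows "0 \<le> i \<and> i < m \<and> 0 \<le> j \<and> j < n"
  using assms row_parity_neg row_parity_right_of_grid[OF C] row_parity_outside_rows[OF C(1)]
  by (meson not_le)

definition block :: "(int \<times> int) set" where
  "block = {(i, j). a \<le> i \<and> i < a + s \<and> b \<le> j \<and> j < b + s}"

lemma finite_block: "finite block"
  unfolding block_def by (rule finite_subset[of _ "{a..<a + s} \<times> {b..<b + s}"]) auto

text \<open>No edge of the lattice lies strictly inside the defect.\<close>
lemma row_parity_on_block:
  assumes C: "C \<subseteq> L" "bd C = {}" and ij: "(i, j) \<in> block"
  shows "row_parity C i j = row_parity C a b"
proof -
  have i: "a \<le> i" "i < a + s" and j: "b \<le> j" "j < b + s"
    using ij unfolding block_def by auto
  have "i < a + s \<longrightarrow> row_parity C i j = row_parity C a j"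
    using i(1)
  proof (induction i rule: int_ge_induct)
    case (step i)
    have "i + 1 < a + s \<Longrightarrow> vE (i + 1) j \<notin> C"
      using C(1) step.hyps j by auto
    then show ?case
      using step.IH vE_mem_iff_row_parity[OF C(1), of "i + 1" j] by auto
  qed simp
  moreover have "j < b + s \<longrightarrow> row_parity C a j = row_parity C a b"
    using j(1)
  proof (induction j rule: int_ge_induct)
    case (step j)
    have "j + 1 < b + s \<Longrightarrow> hE a (j + 1) \<notin> C"
      using C(1) step.hyps s_pos by auto
    then show ?case
      using step.IH hE_mem_iff_row_parity[OF C, of a "j + 1"] by auto
  qed simp
  ultimately show ?thesis
    using i j by simp
qed

lemma plaquettes_bd_block: "plaquettes_bd block = fe Defect"
  by (rule grid_edge_set_eqI[OF plaquettes_bd_subset_grid_edges face_edges_subset_grid_edges])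
    (use s_pos in \<open>auto simp: block_def\<close>)

lemma Plaq_mem_F [simp]:
  "Plaq i j \<in> F \<longleftrightarrow> 0 \<le> i \<and> i < m \<and> 0 \<le> j \<and> j < n \<and> \<not> (a \<le> i \<and> i < a + s \<and> b \<le> j \<and> j < b + s)"
  unfolding lat_faces_def by auto

definition cells :: "(int \<times> int) set" where
  "cells = {(i, j). Plaq i j \<in> F}"

lemma mem_cells: "(i, j) \<in> cells \<longleftrightarrow> Plaq i j \<in> F"
  unfolding cells_def by simp

lemma plaquettes_bd_cell_subset_L: "p \<in> cells \<Longrightarrow> plaquettes_bd {p} \<subseteq> L"
  by (cases p) (auto simp: plaquettes_bd_singleton mem_cells)

lemma plaquettes_bd_cell_eq_face_edges: "plaquettes_bd {(i, j)} = fe (Plaq i j)"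
  by (auto simp: plaquettes_bd_singleton)

text \<open>p and q are the two plaquettes on either side of e.\<close>
lemma faces_of_edge:
  assumes "e \<in> L"
  obtains p q where "\<And>f. f \<in> F \<Longrightarrow> e \<in> fe f \<Longrightarrow> f \<in> {p, q, Defect, Outer}"
    and "\<not> (e \<in> fe Defect \<and> e \<in> fe Outer)"
    and "e \<in> fe Defect \<or> e \<in> fe Outer \<Longrightarrow> \<not> (p \<in> F \<and> q \<in> F)"
proof -
  obtain x y where "e = hE x y \<or> e = vE x y"
    using assms unfolding lat_edges_def by blast
  then show ?thesis
  proof
    assume e: "e = hE x y"
    show ?thesis
    proof (rule that[of "Plaq x y" "Plaq x (y - 1)"])
      show "f \<in> {Plaq x y, Plaq x (y - 1), Defect, Outer}" if "f \<in> F" "e \<in> fe f" for f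
        using that unfolding e by (cases f) auto
    qed (use e s_pos b_pos block_top in auto)
  next
    assume e: "e = vE x y"
    show ?thesis
    proof (rule that[of "Plaq x y" "Plaq (x - 1) y"])
      show "f \<in> {Plaq x y, Plaq (x - 1) y, Defect, Outer}" if "f \<in> F" "e \<in> fe f" for f
        using that unfolding e by (cases f) auto
    qed (use e s_pos a_pos block_right in auto)
  qed
qed

lemma no_edge_on_three_faces:
  assumes e: "e \<in> L" and f: "f1 \<in> F" "f2 \<in> F" "f3 \<in> F" "distinct [f1, f2, f3]"
    and on: "e \<in> fe f1" "e \<in> fe f2" "e \<in> fe f3"
  shows False
proof -
  obtain p q where faces: "\<And>f. f \<in> F \<Longrightarrow> e \<in> fe f \<Longrightarrow> f \<in> {p, q, Defect, Outer}"
    and not_both: "\<not> (e \<in> fe Defect \<and> e \<in> fe Outer)"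
    and boundary: "e \<in> fe Defect \<or> e \<in> fe Outer \<Longrightarrow> \<not> (p \<in> F \<and> q \<in> F)"
    using faces_of_edge[OF e] by blast
  have "{f1, f2, f3} \<subseteq> {p, q, Defect, Outer}"
    using faces f on by blast
  then show False
    using f on not_both boundary by auto
qed

lemma length_fs: "length fs = Suc (length es)"
  using dual_path unfolding dual_path_def by simp

lemma fs_first: "fs ! 0 = Defect"
  using dual_path unfolding dual_path_def by (metis hd_conv_nth)

lemma fs_last: "fs ! length es = Outer"
  using dual_path length_fs unfolding dual_path_def by (metis diff_Suc_1 last_conv_nth)

lemma nth_fs_mem_F: "k \<le> length es \<Longrightarrow> fs ! k \<in> F"
  using dual_path length_fs unfolding dual_path_def by (metis le_imp_less_Suc nth_mem subsetD)

lemma nth_es_between_faces: "k < length es \<Longrightarrow> es ! k \<in> L \<and> es ! k \<in> fe (fs ! k) \<and> es ! k \<in> fe (fs ! Suc k)"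
  using dual_path unfolding dual_path_def by blast

lemma distinct_fs: "distinct fs"
  using dual_path unfolding dual_path_def by simp

lemma nth_fs_eq_iff: "k \<le> length es \<Longrightarrow> k' \<le> length es \<Longrightarrow> fs ! k = fs ! k' \<longleftrightarrow> k = k'"
  using distinct_fs length_fs by (simp add: nth_eq_iff_index_eq)

lemma es_nonempty: "0 < length es"
  using fs_first fs_last by (metis face.distinct(5) gr0I)

lemma distinct_es: "distinct es"
proof -
  have "es ! k \<noteq> es ! k'" if "k < k'" "k' < length es" for k k'
  proof
    assume eq: "es ! k = es ! k'"
    have "distinct [fs ! k, fs ! Suc k, fs ! Suc k']"
      using that nth_fs_eq_iff by simp
    moreover have "es ! k \<in> fe (fs ! Suc k')"
      using eq nth_es_between_faces[of k'] that by simp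
    moreover have "fs ! k \<in> F" "fs ! Suc k \<in> F" "fs ! Suc k' \<in> F"
      using nth_fs_mem_F that by simp_all
    ultimately show False
      using no_edge_on_three_faces[of "es ! k" "fs ! k" "fs ! Suc k" "fs ! Suc k'"] nth_es_between_faces[of k] that
      by simp
  qed
  then show ?thesis
    unfolding distinct_conv_nth by (metis linorder_neq_iff)
qed

lemma face_edges_Int_path:
  assumes "f \<in> F"
  shows "fe f \<inter> set es = (!) es ` {k. k < length es \<and> (fs ! k = f \<or> fs ! Suc k = f)}"
proof (intro set_eqI iffI)
  fix e assume "e \<in> fe f \<inter> set es"
  then obtain k where k: "k < length es" "e = es ! k" "e \<in> fe f"
    by (auto simp: in_set_conv_nth)
  have "distinct [fs ! k, fs ! Suc k]"
    using k(1) nth_fs_eq_iff by simp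
  then have "fs ! k = f \<or> fs ! Suc k = f"
    using no_edge_on_three_faces[of e "fs ! k" "fs ! Suc k" f] nth_es_between_faces[OF k(1)] nth_fs_mem_F k assms
    by auto
  then show "e \<in> (!) es ` {k. k < length es \<and> (fs ! k = f \<or> fs ! Suc k = f)}"
    using k by blast
qed (use nth_es_between_faces in auto)

lemma odd_card_face_edges_path:
  assumes f: "f \<in> F"
  shows "odd (card (fe f \<inter> set es)) \<longleftrightarrow> f = Defect \<or> f = Outer"
proof -
  have "card (fe f \<inter> set es) = card {k. k < length es \<and> (fs ! k = f \<or> fs ! Suc k = f)}"
    unfolding face_edges_Int_path[OF f] by (rule card_image) (simp add: inj_on_nth distinct_es)
  then show ?thesis
    using odd_card_adjacent_positions[OF distinct_fs length_fs es_nonempty, of f] fs_first fs_last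
    by auto
qed

lemma even_cross_plaquettes_bd_cell:
  assumes "p \<in> cells"
  shows "\<not> odd_cross (plaquettes_bd {p})"
proof (cases p)
  case (Pair i j)
  then have "Plaq i j \<in> F"
    using assms mem_cells by blast
  then show ?thesis
    unfolding Pair plaquettes_bd_cell_eq_face_edges using odd_card_face_edges_path by blast
qed

lemma plaquettes_bd_cells:
  assumes "finite A" "A \<subseteq> cells"
  shows "plaquettes_bd A \<subseteq> L \<and> \<not> odd_cross (plaquettes_bd A)"
  using assms
proof (induction A rule: finite_induct)
  case (insert p A)
  have fin: "finite (plaquettes_bd A)" "finite (plaquettes_bd {p})"
    using insert.hyps(1) finite_plaquettes_bd finite_plaquettes_bd_singleton by auto
  show ?case
    unfolding plaquettes_bd_insert[OF insert.hyps(2)]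
    using insert plaquettes_bd_cell_subset_L[of p] even_cross_plaquettes_bd_cell[of p]
      odd_card_symdiff_Int[OF fin]
    by (auto simp: symdiff_def)
qed simp

lemma odd_cross_defect_symdiff_plaquettes_bd:
  assumes "finite A" "A \<subseteq> cells"
  shows "odd_cross (symdiff (plaquettes_bd A) (fe Defect))"
proof -
  have fin: "finite (plaquettes_bd A)" "finite (fe Defect)"
    using assms(1) finite_block finite_plaquettes_bd plaquettes_bd_block by auto
  have "\<not> odd_cross (plaquettes_bd A)"
    using plaquettes_bd_cells[OF assms] by simp
  moreover have "odd_cross (fe Defect)"
    using odd_card_face_edges_path[of Defect] by (simp add: lat_faces_def)
  ultimately show ?thesis
    unfolding odd_card_symdiff_Int[OF fin] by simp
qed

text \<open>The region enclosed by a cycle either avoids the defect, or contains all of it; in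
  the latter case the cycle is the boundary of the defect plus plaquette boundaries and
  therefore crosses the dual path an odd number of times.\<close>
lemma even_cycle_eq_plaquettes_bd:
  assumes C: "C \<subseteq> L" "bd C = {}" "\<not> odd_cross C"
  obtains A where "finite A" "A \<subseteq> cells" "C = plaquettes_bd A"
proof -
  define H where "H = {(i, j). row_parity C i j}"
  have C_H: "C = plaquettes_bd H"
    unfolding H_def by (rule cycle_eq_plaquettes_bd[OF C(1,2)])
  have H_grid: "H \<subseteq> {0..<m} \<times> {0..<n}"
    unfolding H_def using row_parity_support[OF C(1,2)] by auto
  then have "finite H"
    by (rule finite_subset) simp
  have H_cells: "H - block \<subseteq> cells"
  proof
    fix p assume "p \<in> H - block"
    then show "p \<in> cells"
      using H_grid unfolding block_def by (cases p) (auto simp: mem_cells)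
  qed
  show ?thesis
  proof (cases "row_parity C a b")
    case False
    then have "H \<inter> block = {}"
      unfolding H_def using row_parity_on_block[OF C(1,2)] by blast
    then have "H \<subseteq> cells"
      using H_cells by blast
    then show ?thesis
      using that \<open>finite H\<close> C_H by blast
  next
    case True
    then have "block \<subseteq> H"
      unfolding H_def using row_parity_on_block[OF C(1,2)] by blast
    then have "H = symdiff (H - block) block"
      by (auto simp: symdiff_def)
    then have C_sum: "C = symdiff (plaquettes_bd (H - block)) (fe Defect)"
      unfolding plaquettes_bd_block[symmetric] plaquettes_bd_symdiff[symmetric] using C_H by metis
    then have "odd_cross C"
      using odd_cross_defect_symdiff_plaquettes_bd \<open>finite H\<close> H_cells by simp
    then show ?thesis
      using C(3) by contradiction
  qed
qed

lemma min_chain_corner: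
  assumes "hE i j \<in> L" "vE i j \<in> L"
  shows "min_chain {hE i j, vE i j}"
proof -
  have "{hE i j, vE i j} = symdiff {hE i j} {vE i j}"
    by (auto simp: symdiff_def)
  then have "bd {hE i j, vE i j} = symdiff (hE i j) (vE i j)"
    by (simp add: bd_symdiff)
  also have "\<dots> = {(i + 1, j), (i, j + 1)}"
    by (auto simp: symdiff_def hE_def vE_def)
  finally have bd_corner: "bd {hE i j, vE i j} = {(i + 1, j), (i, j + 1)}" .
  have two_edges: "2 \<le> card R'" if R': "R' \<subseteq> L" "bd R' = bd {hE i j, vE i j}" for R'
  proof (rule ccontr)
    assume "\<not> 2 \<le> card R'"
    then have "card R' = 0 \<or> card R' = 1"
      by linarith
    moreover have "finite R'"
      using R' finite_chain by blast
    ultimately have "R' = {} \<or> (\<exists>e. R' = {e})"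
      by (auto simp: card_1_singleton_iff)
    then show False
    proof
      assume "R' = {}"
      then show False
        using R'(2) bd_corner by simp
    next
      assume "\<exists>e. R' = {e}"
      then obtain e where "R' = {e}" ..
      then have e: "(i + 1, j) \<in> e" "(i, j + 1) \<in> e" "e \<in> L"
        using R' bd_corner by auto
      then obtain x y where "e = hE x y \<or> e = vE x y"
        using lat_edges_subset_grid_edges unfolding grid_edges_def by blast
      then show False
        using e(1,2) by auto
    qed
  qed
  show ?thesis
    unfolding min_chain_def
  proof (intro conjI allI impI)
    show "{hE i j, vE i j} \<subseteq> L"
      using assms by blast
    fix R' assume R': "R' \<subseteq> L \<and> bd R' = bd {hE i j, vE i j}"
    have "card {hE i j, vE i j} = 2"
      by simp
    then show "card {hE i j, vE i j} \<le> card R'"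
      using two_edges[OF conjunct1[OF R'] conjunct2[OF R']] by linarith
  qed
qed

lemma flip_steps_plaquette:
  assumes Y: "Y \<subseteq> L" "bd Y = {}" "odd_cross Y" and p: "p \<in> cells"
  shows "flip_step\<^sup>*\<^sup>* Y (symdiff Y (plaquettes_bd {p}))"
proof (cases p)
  case (Pair i j)
  have P: "plaquettes_bd {p} \<subseteq> L" "bd (plaquettes_bd {p}) = {}" "\<not> odd_cross (plaquettes_bd {p})"
    using p plaquettes_bd_cell_subset_L bd_plaquettes_bd_singleton even_cross_plaquettes_bd_cell
    by auto
  then have "hE i j \<in> L" "vE i j \<in> L" "vE (i + 1) j \<in> L"
    unfolding Pair plaquettes_bd_singleton by auto
  then have "min_chain {hE i j}" "min_chain {hE i j, vE i j}" "min_chain {vE (i + 1) j}"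
    using min_chain_corner by (auto intro!: min_chain_singleton simp: hE_def vE_def)
  then show ?thesis
    using flip_steps_four_cycle[OF Y plaquettes_bd_singleton _ P[unfolded Pair]] unfolding Pair
    by simp
qed

lemma flip_steps_plaquettes:
  assumes "finite A" "A \<subseteq> cells" and Y: "Y \<subseteq> L" "bd Y = {}" "odd_cross Y"
  shows "flip_step\<^sup>*\<^sup>* Y (symdiff Y (plaquettes_bd A))"
  using assms(1,2)
proof (induction A rule: finite_induct)
  case empty
  then show ?case
    by (simp add: symdiff_def)
next
  case (insert p A)
  let ?Y' = "symdiff Y (plaquettes_bd A)"
  have A: "plaquettes_bd A \<subseteq> L" "\<not> odd_cross (plaquettes_bd A)"
    using plaquettes_bd_cells insert by auto
  have Y': "?Y' \<subseteq> L" "bd ?Y' = {}" "odd_cross ?Y'"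
    using symdiff_cycles[OF Y(1) A(1) Y(2) bd_plaquettes_bd[OF insert.hyps(1)]] Y(3) A(2)
    by simp_all
  have "flip_step\<^sup>*\<^sup>* ?Y' (symdiff ?Y' (plaquettes_bd {p}))"
    using flip_steps_plaquette[OF Y'] insert.prems by simp
  moreover have "symdiff ?Y' (plaquettes_bd {p}) = symdiff Y (plaquettes_bd (insert p A))"
    unfolding plaquettes_bd_insert[OF insert.hyps(2)] by (auto simp: symdiff_def)
  ultimately show ?case
    using insert.IH insert.prems by (metis insert_subset rtranclp_trans)
qed

lemma flip_steps_connected:
  assumes "uncorrectable_chain E" "uncorrectable_chain E'"
  shows "flip_step\<^sup>*\<^sup>* E E'"
proof -
  obtain Z where Z: "flip_step\<^sup>*\<^sup>* E Z" "Z \<subseteq> L" "bd Z = {}" "odd_cross Z"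
    using flip_steps_to_odd_cycle[OF assms(1)] by blast
  obtain Z' where Z': "flip_step\<^sup>*\<^sup>* E' Z'" "Z' \<subseteq> L" "bd Z' = {}" "odd_cross Z'"
    using flip_steps_to_odd_cycle[OF assms(2)] by blast
  have "symdiff Z Z' \<subseteq> L" "bd (symdiff Z Z') = {}" "\<not> odd_cross (symdiff Z Z')"
    using symdiff_cycles[OF Z(2) Z'(2) Z(3) Z'(3)] Z(4) Z'(4) by simp_all
  then obtain A where A: "finite A" "A \<subseteq> cells" "symdiff Z Z' = plaquettes_bd A"
    by (rule even_cycle_eq_plaquettes_bd)
  have "symdiff Z (plaquettes_bd A) = Z'"
    unfolding A(3)[symmetric] by (auto simp: symdiff_def)
  then have "flip_step\<^sup>*\<^sup>* Z Z'"
    using flip_steps_plaquettes[OF A(1,2) Z(2-4)] by simp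
  then show ?thesis
    using Z(1) flip_steps_sym[OF Z'(1)] by (meson rtranclp_trans)
qed

end

theorem lemma3:
  fixes m n a b s :: int and w :: real
    and fs :: "face list" and es :: "edge list" and E E' :: "edge set"
  assumes "1 \<le> s" and "1 \<le> a" and "1 \<le> b" and "a + s \<le> m - 1" and "b + s \<le> n - 1"
    and "0 < w"
    and "dual_path m n a b s fs es"
    and "E \<subseteq> lat_edges m n a b s" and "E' \<subseteq> lat_edges m n a b s"
    and "uncorrectable (lat_edges m n a b s) (\<lambda>_. w) {} (set es) E"
    and "uncorrectable (lat_edges m n a b s) (\<lambda>_. w) {} (set es) E'"
  shows "\<exists>Es :: edge set list. Es \<noteq> [] \<and> hd Es = E \<and> last Es = E' \<and>
           (\<forall>X \<in> set Es. X \<subseteq> lat_edges m n a b s \<and>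
               uncorrectable (lat_edges m n a b s) (\<lambda>_. w) {} (set es) X) \<and>
           (\<forall>i. Suc i < length Es \<longrightarrow> card (symdiff (Es ! i) (Es ! Suc i)) = 1)"
proof -
  interpret defect_lattice m n a b s w fs es
    using assms(1-7) by unfold_locales
  have "flip_step\<^sup>*\<^sup>* E E'"
    using flip_steps_connected assms(8-11) by blast
  then obtain Xs where path: "rtrancl_path flip_step E Xs E'"
    by (auto simp: rtranclp_eq_rtrancl_path)
  show ?thesis
  proof (intro exI conjI)
    show "E # Xs \<noteq> []" "hd (E # Xs) = E"
      by simp_all
    show "last (E # Xs) = E'"
      using path rtrancl_path_last[OF path] by (cases Xs) (auto elim: rtrancl_path.cases)
    show "\<forall>X \<in> set (E # Xs). uncorrectable_chain X"
      using assms(8,10) rtrancl_path_Range[OF path] by (fastforce simp: flip_step_def)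
    show "\<forall>i. Suc i < length (E # Xs) \<longrightarrow> card (symdiff ((E # Xs) ! i) ((E # Xs) ! Suc i)) = 1"
      using rtrancl_path_nth[OF path] by (auto simp: flip_step_def)
  qed
qed

end
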